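(* Let $X=\{x_1,\dots,x_m\}$ be a finite set, let $d$ be a distance measure between hesitant fuzzy sets on $X$ with maximal value $d_{\max}$, and let $f$ be a monotone decreasing function on $[0,d_{\max}]$ with $f(0)\neq f(d_{\max})$. Define $$s_0(A,B)=\frac{f(d(A,B))-f(d_{\max})}{f(0)-f(d_{\max})}.$$ Then $s_0$ is a similarity measure between hesitant fuzzy sets on $X$, i.e. for all HFSs $A,B,C$ on $X$: (P1) $0\le s_0(A,B)\le 1$; (P2) $s_0(A,B)=1\iff A=B$; (P3) $s_0(A,B)=s_0(B,A)$; (P4) if $A\sqsubseteq B\sqsubseteq C$ then $s_0(A,C)\le s_0(A,B)$ and $s_0(A,C)\le s_0(B,C)$.
   Context: A hesitant fuzzy set (HFS) $A$ on $X$ assigns to each $x\in X$ a hesitant fuzzy element $h_A(x)$, a finite nonempty set of values in $[0,1]$; $n(h_A(x))$ is its number of values. When comparing $A,B$ at $x$, $n_x=\max\{n(h_A(x)),n(h_B(x))\}$ and the shorter element is extended to length $n_x$ by repeatedly adding its minimum value; values are arranged in decreasing order and $h_A^{\sigma(j)}(x)$ is the $j$-th one. $h_A(x)\preceq h_B(x)$ means $h_A^{\sigma(j)}(x)\le h_B^{\sigma(j)}(x)$ for all $j\le n_x$; $h_A(x)=h_B(x)$ means equality for all $j$; $A\sqsubseteq B$ means $h_A(x)\preceq h_B(x)$ for all $x\in X$; $A=B$ means $h_A(x)=h_B(x)$ for all $x$. A distance measure is a function $d$ on pairs of HFSs on $X$ with maximal value $d_{\max}=\max\{d(A,B)\}$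 satisfying: (D1) $0\le d(A,B)\le d_{\max}$; (D2) $d(A,B)=0\iff A=B$; (D3) $d(A,B)=d(B,A)$; (D4) if $A\sqsubseteq B\sqsubseteq C$ then $d(A,B)\le d(A,C)$ and $d(B,C)\le d(A,C)$. *)

theory Defs
  imports Complex_Main
begin

definition hfs :: "'a set \<Rightarrow> ('a \<Rightarrow> real set) \<Rightarrow> bool" where
  "hfs X h \<longleftrightarrow> (\<forall>x\<in>X. finite (h x) \<and> h x \<noteq> {} \<and> h x \<subseteq> {0..1})"

text \<open>Values of a hesitant fuzzy element in decreasing order, extended to length n
  by repeatedly adding its minimum value; the j-th entry (0-based) is h^sigma(j+1).\<close>
definition hfe_ext :: "real set \<Rightarrow> nat \<Rightarrow> real list" where
  "hfe_ext H n = rev (sorted_list_of_set H) @ replicate (n - card H) (Min H)"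

definition hfe_le :: "real set \<Rightarrow> real set \<Rightarrow> bool" where
  "hfe_le H K \<longleftrightarrow> (let n = max (card H) (card K) in
      \<forall>j<n. hfe_ext H n ! j \<le> hfe_ext K n ! j)"

definition hfe_eq :: "real set \<Rightarrow> real set \<Rightarrow> bool" where
  "hfe_eq H K \<longleftrightarrow> (let n = max (card H) (card K) in
      \<forall>j<n. hfe_ext H n ! j = hfe_ext K n ! j)"

definition hfs_sub :: "'a set \<Rightarrow> ('a \<Rightarrow> real set) \<Rightarrow> ('a \<Rightarrow> real set) \<Rightarrow> bool" where
  "hfs_sub X A B \<longleftrightarrow> (\<forall>x\<in>X. hfe_le (A x) (B x))"

definition hfs_eq :: "'a set \<Rightarrow> ('a \<Rightarrow> real set) \<Rightarrow> ('a \<Rightarrow> real set) \<Rightarrow> bool" where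
  "hfs_eq X A B \<longleftrightarrow> (\<forall>x\<in>X. hfe_eq (A x) (B x))"

definition distance_measure ::
  "'a set \<Rightarrow> (('a \<Rightarrow> real set) \<Rightarrow> ('a \<Rightarrow> real set) \<Rightarrow> real) \<Rightarrow> real \<Rightarrow> bool" where
  "distance_measure X d dmax \<longleftrightarrow>
     (\<exists>A B. hfs X A \<and> hfs X B \<and> d A B = dmax) \<and>
     (\<forall>A B. hfs X A \<and> hfs X B \<longrightarrow> 0 \<le> d A B \<and> d A B \<le> dmax) \<and>
     (\<forall>A B. hfs X A \<and> hfs X B \<longrightarrow> (d A B = 0 \<longleftrightarrow> hfs_eq X A B)) \<and>
     (\<forall>A B. hfs X A \<and> hfs X B \<longrightarrow> d A B = d B A) \<and>
     (\<forall>A B C. hfs X A \<and> hfs X B \<and> hfs X C \<and> hfs_sub X A B \<and> hfs_sub X B C \<longrightarrow>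
         d A B \<le> d A C \<and> d B C \<le> d A C)"

definition similarity_measure ::
  "'a set \<Rightarrow> (('a \<Rightarrow> real set) \<Rightarrow> ('a \<Rightarrow> real set) \<Rightarrow> real) \<Rightarrow> bool" where
  "similarity_measure X s \<longleftrightarrow>
     (\<forall>A B. hfs X A \<and> hfs X B \<longrightarrow> 0 \<le> s A B \<and> s A B \<le> 1) \<and>
     (\<forall>A B. hfs X A \<and> hfs X B \<longrightarrow> (s A B = 1 \<longleftrightarrow> hfs_eq X A B)) \<and>
     (\<forall>A B. hfs X A \<and> hfs X B \<longrightarrow> s A B = s B A) \<and>
     (\<forall>A B C. hfs X A \<and> hfs X B \<and> hfs X C \<and> hfs_sub X A B \<and> hfs_sub X B C \<longrightarrow>
         s A C \<le> s A B \<and> s A C \<le> s B C)"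

end

theory Submission
  imports Defs
begin

text \<open>A similarity measure is obtained from a distance measure by composing with any
  antitone map g from [0, dmax] to [0, 1] that takes the value 1 exactly at 0; the
  normalisation of a strictly decreasing f with f 0 \<noteq> f dmax is such a map.\<close>

lemma distance_measure_range:
  assumes "distance_measure X d dmax" "hfs X A" "hfs X B"
  shows "d A B \<in> {0..dmax}"
  using assms unfolding distance_measure_def by auto

lemma distance_measure_max_nonneg:
  assumes "distance_measure X d dmax"
  shows "0 \<le> dmax"
  using assms unfolding distance_measure_def by fastforce

lemma similarity_measure_comp_distance:
  assumes d: "distance_measure X d dmax"
    and g_antimono: "antimono_on {0..dmax} g"
    and g_range: "g ` {0..dmax} \<subseteq> {0..1}"
    and g_eq_1: "\<And>t. t \<in> {0..dmax} \<Longrightarrow> g t = 1 \<longleftrightarrow> t = 0"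
  shows "similarity_measure X (\<lambda>A B. g (d A B))"
  unfolding similarity_measure_def
proof (intro conjI allI impI)
  note D = d[unfolded distance_measure_def]
  fix A B assume AB: "hfs X A \<and> hfs X B"
  then have dAB: "d A B \<in> {0..dmax}" using distance_measure_range d by blast
  then have "g (d A B) \<in> {0..1}" using g_range by blast
  then show "0 \<le> g (d A B)" "g (d A B) \<le> 1" by auto
  have "g (d A B) = 1 \<longleftrightarrow> d A B = 0" using g_eq_1 dAB .
  also have "\<dots> \<longleftrightarrow> hfs_eq X A B" using D AB by blast
  finally show "g (d A B) = 1 \<longleftrightarrow> hfs_eq X A B" .
  show "g (d A B) = g (d B A)" using D AB by metis
next
  note D = d[unfolded distance_measure_def]
  fix A B C assume ABC: "hfs X A \<and> hfs X B \<and> hfs X C \<and> hfs_sub X A B \<and> hfs_sub X B C"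
  then have "d A B \<le> d A C" "d B C \<le> d A C" using D by blast+
  moreover have "d A B \<in> {0..dmax}" "d B C \<in> {0..dmax}" "d A C \<in> {0..dmax}"
    using ABC distance_measure_range[OF d] by auto
  ultimately show "g (d A C) \<le> g (d A B)" "g (d A C) \<le> g (d B C)"
    using monotone_onD[OF g_antimono] by blast+
qed

lemma normalized_strict_antimono:
  fixes f :: "real \<Rightarrow> real"
  assumes f: "strict_antimono_on {0..dmax} f" and "0 \<le> dmax" and "f 0 \<noteq> f dmax"
  defines "g \<equiv> \<lambda>t. (f t - f dmax) / (f 0 - f dmax)"
  shows "antimono_on {0..dmax} g"
    and "g ` {0..dmax} \<subseteq> {0..1}"
    and "\<And>t. t \<in> {0..dmax} \<Longrightarrow> g t = 1 \<longleftrightarrow> t = 0"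
proof -
  have f_less: "f t < f s" if "s \<in> {0..dmax}" "t \<in> {0..dmax}" "s < t" for s t
    using monotone_onD[OF f that] .
  have f_le: "f t \<le> f s" if "s \<in> {0..dmax}" "t \<in> {0..dmax}" "s \<le> t" for s t
    using f_less[OF that(1,2)] that(3) by (cases "s = t") auto
  have "0 < dmax" using assms(2,3) by (cases "dmax = 0") auto
  then have denom_pos: "0 < f 0 - f dmax" using f_less[of 0 dmax] by simp
  show "antimono_on {0..dmax} g"
    by (rule monotone_onI) (simp add: g_def denom_pos divide_right_mono f_le)
  show "g ` {0..dmax} \<subseteq> {0..1}"
    using f_le[of 0] f_le[of _ dmax] \<open>0 \<le> dmax\<close> denom_pos by (auto simp: g_def)
  fix t assume t: "t \<in> {0..dmax}"
  have "g t = 1 \<longleftrightarrow> f t = f 0" using denom_pos by (auto simp: g_def)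
  also have "\<dots> \<longleftrightarrow> t = 0" using f_less[of 0 t] t \<open>0 \<le> dmax\<close> by force
  finally show "g t = 1 \<longleftrightarrow> t = 0" .
qed

theorem theorem5:
  fixes X :: "'a set" and d :: "('a \<Rightarrow> real set) \<Rightarrow> ('a \<Rightarrow> real set) \<Rightarrow> real"
    and dmax :: real and f :: "real \<Rightarrow> real"
  assumes "finite X"
    and "distance_measure X d dmax"
    and "\<forall>x\<in>{0..dmax}. \<forall>y\<in>{0..dmax}. x < y \<longrightarrow> f y < f x"
    and "f 0 \<noteq> f dmax"
  shows "similarity_measure X (\<lambda>A B. (f (d A B) - f dmax) / (f 0 - f dmax))"
proof -
  have "strict_antimono_on {0..dmax} f"
    using assms(3) by (intro monotone_onI) auto
  note g = normalized_strict_antimono[OF this distance_measure_max_nonneg[OF assms(2)] assms(4)]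
  show ?thesis
    by (rule similarity_measure_comp_distance[OF assms(2) g])
qed

end
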